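(* Suppose there exist a symmetric matrix $B\in\mathbb{R}^{n^2\times n^2}$ with $B\ge0$ entrywise and $B\circ xx^{\top}=0$, and symmetric matrices $T,K,Z,H\in\mathbb{R}^{n\times n}$, such that the matrix $Q:=M-B-S$, where $S=T\otimes I_n+I_n\otimes K+J_n\otimes H+Z\otimes J_n$, satisfies $Qx=0$ and $Q\succeq c\,(I_{n^2}-n^{-1}xx^{\top})$ for some $c\ge0$. Then $X=xx^{\top}$ is a global minimizer of SDR I. If moreover $c>0$, then $xx^{\top}$ is the unique global minimizer of SDR I.
   Context: $A,\Delta\in\mathbb{R}^{n\times n}$ are symmetric, $C=A+\Delta$, $M=(I_n\otimes A-C\otimes I_n)^2$, $x=\mathrm{vec}(I_n)\in\mathbb{R}^{n^2}$ (column stacking), $J_n$ is the all-ones $n\times n$ matrix, $\otimes$ the Kronecker product, $\circ$ the Hadamard (entrywise) product. For $X\in\mathbb{R}^{n^2\times n^2}$, $X_{ij}$ denotes its $(i,j)$-th $n\times n$ block. SDR I is: minimize $\langle M,X\rangle$ over symmetric $X\in\mathbb{R}^{n^2\times n^2}$ subject to $X\succeq0$, $X\ge0$ entrywise, $\mathrm{Tr}(X_{ij})=\delta_{ij}$ and $\langle X_{ij},J_n\rangle=1$ for all $i,j$, $\sum_i X_{ii}=I_n$, $\sum_{i,j}X_{ij}=J_n$. *)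

theory Defs
  imports "HOL-Analysis.Analysis"
begin

text \<open>Convention: an index of R^(n^2) is a pair (a,b) of indices in 'n, standing for
  position (a-1)n+b. Thus the first component is the block index and the second the
  position within the block.\<close>

definition kron :: "real^('n::finite)^'n \<Rightarrow> real^('m::finite)^'m \<Rightarrow> real^('n \<times> 'm)^('n \<times> 'm)" where
  "kron A B = (\<chi> p q. A $ fst p $ fst q * B $ snd p $ snd q)"

definition hadamard :: "real^'m^'k \<Rightarrow> real^'m^'k \<Rightarrow> real^'m^'k" where
  "hadamard A B = (\<chi> i j. A $ i $ j * B $ i $ j)"

definition outer :: "real^'m \<Rightarrow> real^'m \<Rightarrow> real^'m^'m" where
  "outer x y = (\<chi> i j. x $ i * y $ j)"

definition Jmat :: "real^'n^('n::finite)" where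
  "Jmat = (\<chi> i j. 1)"

text \<open>vec(I_n) with column stacking: entry at position (a-1)n+b is I_{b a}.\<close>
definition vecI :: "real^('n::finite \<times> 'n)" where
  "vecI = (\<chi> p. if snd p = fst p then 1 else 0)"

definition blk :: "real^('n::finite \<times> 'n)^('n \<times> 'n) \<Rightarrow> 'n \<Rightarrow> 'n \<Rightarrow> real^'n^'n" where
  "blk X i j = (\<chi> a b. X $ (i, a) $ (j, b))"

definition frob :: "real^('m::finite)^('k::finite) \<Rightarrow> real^'m^'k \<Rightarrow> real" where
  "frob A B = (\<Sum>i\<in>UNIV. \<Sum>j\<in>UNIV. A $ i $ j * B $ i $ j)"

definition symmetric_mat :: "real^('m::finite)^'m \<Rightarrow> bool" where
  "symmetric_mat A \<longleftrightarrow> transpose A = A"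

definition psd :: "real^('m::finite)^'m \<Rightarrow> bool" where
  "psd A \<longleftrightarrow> symmetric_mat A \<and> (\<forall>v. 0 \<le> v \<bullet> (A *v v))"

definition nonneg_mat :: "real^'m^'k \<Rightarrow> bool" where
  "nonneg_mat A \<longleftrightarrow> (\<forall>i j. 0 \<le> A $ i $ j)"

definition SDR1_feasible :: "real^('n::finite \<times> 'n)^('n \<times> 'n) \<Rightarrow> bool" where
  "SDR1_feasible X \<longleftrightarrow>
     symmetric_mat X \<and> psd X \<and> nonneg_mat X \<and>
     (\<forall>i j. trace (blk X i j) = (if i = j then 1 else 0)) \<and>
     (\<forall>i j. frob (blk X i j) (Jmat :: real^'n^'n) = 1) \<and>
     (\<Sum>i\<in>UNIV. blk X i i) = mat 1 \<and>
     (\<Sum>i\<in>UNIV. \<Sum>j\<in>UNIV. blk X i j) = Jmat"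

definition SDR1_global_min :: "real^('n::finite \<times> 'n)^('n \<times> 'n) \<Rightarrow> real^('n \<times> 'n)^('n \<times> 'n) \<Rightarrow> bool" where
  "SDR1_global_min M X0 \<longleftrightarrow> SDR1_feasible X0 \<and>
     (\<forall>X. SDR1_feasible X \<longrightarrow> frob M X0 \<le> frob M X)"

definition SDR1_unique_global_min :: "real^('n::finite \<times> 'n)^('n \<times> 'n) \<Rightarrow> real^('n \<times> 'n)^('n \<times> 'n) \<Rightarrow> bool" where
  "SDR1_unique_global_min M X0 \<longleftrightarrow> SDR1_global_min M X0 \<and>
     (\<forall>X. SDR1_global_min M X \<longrightarrow> X = X0)"

end

theory Submission
  imports Defs
begin

text \<open>Weak duality. Split \<open>M = Q + B + S\<close>. On the feasible set, \<open>\<langle>S, X\<rangle>\<close> is a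
  constant fixed by the linear constraints, \<open>\<langle>B, X\<rangle> \<ge> 0\<close> by nonnegativity, and
  \<open>\<langle>Q, X\<rangle> \<ge> c \<langle>I - xx\<^sup>T/n, X\<rangle>\<close> because the Frobenius product of two
  positive semidefinite matrices is nonnegative. Every entry of a feasible \<open>X\<close> is at most 1,
  so \<open>\<langle>xx\<^sup>T, X\<rangle> \<le> n\<^sup>2 = n \<langle>I, X\<rangle>\<close> and the last bound is nonnegative.
  At \<open>X = xx\<^sup>T\<close> the \<open>Q\<close>- and \<open>B\<close>-terms vanish because \<open>Qx = 0\<close> and
  \<open>B \<circ> xx\<^sup>T = 0\<close>, so \<open>xx\<^sup>T\<close> is optimal. If \<open>c > 0\<close>, a minimizer has
  \<open>\<langle>xx\<^sup>T, X\<rangle> = n\<^sup>2\<close>: all entries \<open>X_{(i,i),(j,j)}\<close> equal 1, and since each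
  block of \<open>X\<close> is nonnegative with entry sum 1, all other entries vanish.\<close>

section \<open>Positive semidefinite matrices\<close>

lemma symmetric_mat_entry: "symmetric_mat X \<Longrightarrow> X $ i $ j = X $ j $ i"
  unfolding symmetric_mat_def by (metis transpose_def vec_lambda_beta)

lemma symmetric_mat_diff:
  "symmetric_mat A \<Longrightarrow> symmetric_mat B \<Longrightarrow> symmetric_mat (A - B)"
  by (simp add: symmetric_mat_def transpose_def vec_eq_iff)

lemma symmetric_mat_scaleR: "symmetric_mat A \<Longrightarrow> symmetric_mat (r *\<^sub>R A)"
  by (simp add: symmetric_mat_def transpose_scalar)

lemma symmetric_mat_outer_self: "symmetric_mat (outer u u)"
  by (simp add: symmetric_mat_def transpose_def outer_def vec_eq_iff mult.commute)

lemma symmetric_mat_inner_commute: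
  fixes X :: "real^'n^'n"
  assumes "symmetric_mat X"
  shows "u \<bullet> (X *v w) = w \<bullet> (X *v u)"
  by (metis assms dot_lmul_matrix inner_commute symmetric_mat_def vector_transpose_matrix)

lemma inner_axis_matrix_vector: "axis k 1 \<bullet> ((X :: real^'n^'m) *v w) = X $ k \<bullet> w"
  unfolding inner_axis' by (simp add: matrix_vector_mult_def inner_vec_def)

lemma inner_axis_matrix_axis: "axis i 1 \<bullet> ((X :: real^'n^'m) *v axis j 1) = X $ i $ j"
  by (simp add: inner_axis_matrix_vector inner_axis)

lemma inner_outer_self: "w \<bullet> (outer u u *v w) = (u \<bullet> w)\<^sup>2"
  by (simp add: outer_def inner_vec_def matrix_vector_mult_def power2_eq_square sum_product
      sum_distrib_left mult_ac)

lemma nonneg_quadratic_discriminant: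
  fixes a b c :: real
  assumes "0 \<le> a" and nonneg: "\<And>t. 0 \<le> a * t\<^sup>2 + 2 * b * t + c"
  shows "b\<^sup>2 \<le> a * c"
proof (cases "a = 0")
  case True
  have "b = 0"
  proof (rule ccontr)
    assume "b \<noteq> 0"
    then show False using nonneg[of "- (c + 1) / (2 * b)"] True by (simp add: field_simps)
  qed
  with True show ?thesis by simp
next
  case False
  with assms(1) have "0 < a" by simp
  have "0 \<le> a * (- b / a)\<^sup>2 + 2 * b * (- b / a) + c" by (rule nonneg)
  also have "\<dots> = (a * c - b\<^sup>2) / a" using \<open>0 < a\<close> by (simp add: field_simps power2_eq_square)
  finally show ?thesis using \<open>0 < a\<close> by (simp add: zero_le_divide_iff)
qed

lemma symmetric_mat_inner_expand:
  fixes X :: "real^'n^'n"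
  assumes "symmetric_mat X"
  shows "(w + t *\<^sub>R u) \<bullet> (X *v (w + t *\<^sub>R u))
    = (u \<bullet> (X *v u)) * t\<^sup>2 + 2 * (u \<bullet> (X *v w)) * t + w \<bullet> (X *v w)"
  using symmetric_mat_inner_commute[OF assms, of w u]
  by (simp add: algebra_simps power2_eq_square)

lemma psd_Cauchy_Schwarz:
  assumes "psd X"
  shows "(u \<bullet> (X *v w))\<^sup>2 \<le> (u \<bullet> (X *v u)) * (w \<bullet> (X *v w))"
proof (rule nonneg_quadratic_discriminant)
  show "0 \<le> u \<bullet> (X *v u)" using assms by (simp add: psd_def)
  fix t
  show "0 \<le> (u \<bullet> (X *v u)) * t\<^sup>2 + 2 * (u \<bullet> (X *v w)) * t + w \<bullet> (X *v w)"
    using assms symmetric_mat_inner_expand[of X w t u] unfolding psd_def by metis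
qed

lemma psd_diag_nonneg: "psd X \<Longrightarrow> 0 \<le> X $ k $ k"
  by (metis inner_axis_matrix_axis psd_def)

lemma psd_zero_diag_imp_zero_row:
  assumes "psd X" and "X $ k $ k = 0"
  shows "X $ k $ j = 0"
  using psd_Cauchy_Schwarz[OF assms(1), of "axis k 1" "axis j 1"] assms(2)
  by (simp add: inner_axis_matrix_axis)

lemma psd_Schur_complement:
  fixes X :: "real^'n^'n"
  assumes "psd X" and pos: "0 < X $ k $ k"
  shows "psd (X - (1 / X $ k $ k) *\<^sub>R outer (X $ k) (X $ k))" (is "psd ?Y")
  unfolding psd_def
proof (intro conjI allI)
  show "symmetric_mat ?Y"
    using assms(1)
    by (simp add: psd_def symmetric_mat_diff symmetric_mat_scaleR symmetric_mat_outer_self)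
  fix w
  have "(X $ k \<bullet> w)\<^sup>2 \<le> X $ k $ k * (w \<bullet> (X *v w))"
    using psd_Cauchy_Schwarz[OF assms(1), of "axis k 1" w]
    by (simp add: inner_axis_matrix_vector inner_axis)
  then have "(X $ k \<bullet> w)\<^sup>2 / X $ k $ k \<le> w \<bullet> (X *v w)"
    using pos by (simp add: pos_divide_le_eq mult.commute)
  moreover have "w \<bullet> (?Y *v w) = w \<bullet> (X *v w) - (X $ k \<bullet> w)\<^sup>2 / X $ k $ k"
    by (simp add: matrix_vector_mult_diff_rdistrib inner_diff_right inner_outer_self
        scaleR_matrix_vector_assoc[symmetric])
  ultimately show "0 \<le> w \<bullet> (?Y *v w)" by simp
qed

section \<open>The Frobenius product\<close>

lemma frob_commute: "frob A B = frob B A"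
  by (simp add: frob_def mult.commute)

lemma frob_zero_left: "frob 0 A = 0"
  by (simp add: frob_def)

lemma frob_add_left: "frob (A + B) C = frob A C + frob B C"
  by (simp add: frob_def algebra_simps sum.distrib)

lemma frob_diff_left: "frob (A - B) C = frob A C - frob B C"
  by (simp add: frob_def algebra_simps sum_subtractf)

lemma frob_scaleR_left: "frob (r *\<^sub>R A) B = r * frob A B"
  by (simp add: frob_def sum_distrib_left mult.assoc)

lemma frob_sum_left: "frob (\<Sum>i\<in>I. A i) B = (\<Sum>i\<in>I. frob (A i) B)"
  by (induction I rule: infinite_finite_induct) (simp_all add: frob_add_left frob_zero_left)

lemma frob_outer_left: "frob (outer u v) X = u \<bullet> (X *v v)"
  by (simp add: frob_def outer_def inner_vec_def matrix_vector_mult_def sum_distrib_left mult_ac)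

lemma frob_mat1_left: "frob (mat 1) A = trace A"
  by (simp add: frob_def trace_def mat_def if_distrib if_distribR sum.delta cong: if_cong)

lemma frob_nonneg: "nonneg_mat A \<Longrightarrow> nonneg_mat B \<Longrightarrow> 0 \<le> frob A B"
  unfolding frob_def nonneg_mat_def by (simp add: sum_nonneg)

text \<open>Induction on the number of nonzero diagonal entries: subtracting the rank-one matrix
  \<open>r r\<^sup>T / X_kk\<close>, where \<open>r\<close> is the \<open>k\<close>-th row, leaves a positive semidefinite
  Schur complement with one more zero on the diagonal.\<close>

lemma frob_psd_nonneg:
  assumes R: "psd R" and "psd X"
  shows "0 \<le> frob R X"
  using assms(2)
proof (induction "card {k. X $ k $ k \<noteq> 0}" arbitrary: X rule: less_induct)
  case less
  show ?case
  proof (cases "\<exists>k. X $ k $ k \<noteq> 0")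
    case False
    then have "X = 0" using psd_zero_diag_imp_zero_row[OF less.prems] by (simp add: vec_eq_iff)
    then show ?thesis by (simp add: frob_def)
  next
    case True
    then obtain k where "X $ k $ k \<noteq> 0" by blast
    with psd_diag_nonneg[OF less.prems] have pos: "0 < X $ k $ k" by (simp add: order_less_le)
    have symX: "symmetric_mat X" using less.prems by (simp add: psd_def)
    define Y where "Y = X - (1 / X $ k $ k) *\<^sub>R outer (X $ k) (X $ k)"
    have "{i. Y $ i $ i \<noteq> 0} \<subset> {i. X $ i $ i \<noteq> 0}"
    proof -
      have "Y $ k $ k = 0" using pos by (simp add: Y_def outer_def power2_eq_square)
      moreover have "Y $ i $ i = 0" if "X $ i $ i = 0" for i
      proof -
        have "X $ k $ i = 0"
          using psd_zero_diag_imp_zero_row[OF less.prems that, of k]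
            symmetric_mat_entry[OF symX, of k i]
          by simp
        then show ?thesis using that by (simp add: Y_def outer_def)
      qed
      ultimately show ?thesis using \<open>X $ k $ k \<noteq> 0\<close> by blast
    qed
    then have "card {i. Y $ i $ i \<noteq> 0} < card {i. X $ i $ i \<noteq> 0}"
      by (simp add: psubset_card_mono)
    moreover have "psd Y"
      unfolding Y_def by (rule psd_Schur_complement[OF less.prems pos])
    ultimately have "0 \<le> frob R Y" by (rule less.hyps)
    moreover have "0 \<le> (1 / X $ k $ k) * frob R (outer (X $ k) (X $ k))"
      using R pos by (simp add: frob_commute[of R] frob_outer_left psd_def)
    moreover have "frob X R = frob Y R + (1 / X $ k $ k) * frob (outer (X $ k) (X $ k)) R"
      by (simp add: Y_def frob_diff_left frob_scaleR_left)
    ultimately show ?thesis by (simp add: frob_commute[of R])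
  qed
qed

section \<open>Block structure\<close>

lemma sum_UNIV_prod: "(\<Sum>p\<in>UNIV. f p) = (\<Sum>i\<in>UNIV. \<Sum>a\<in>UNIV. f (i, a) :: 'b::comm_monoid_add)"
  by (simp add: sum.cartesian_product UNIV_Times_UNIV[symmetric] del: UNIV_Times_UNIV)

lemma frob_blk:
  fixes M X :: "real^('n::finite \<times> 'n)^('n \<times> 'n)"
  shows "frob M X = (\<Sum>i\<in>UNIV. \<Sum>j\<in>UNIV. frob (blk M i j) (blk X i j))"
proof -
  have "frob M X = (\<Sum>i\<in>UNIV. \<Sum>a\<in>UNIV. \<Sum>j\<in>UNIV. \<Sum>b\<in>UNIV. M$(i,a)$(j,b) * X$(i,a)$(j,b))"
    by (simp add: frob_def sum_UNIV_prod)
  also have "\<dots> = (\<Sum>i\<in>UNIV. \<Sum>j\<in>UNIV. \<Sum>a\<in>UNIV. \<Sum>b\<in>UNIV. M$(i,a)$(j,b) * X$(i,a)$(j,b))"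
    by (rule sum.cong[OF refl], rule sum.swap)
  finally show ?thesis by (simp add: frob_def blk_def)
qed

lemma blk_kron: "blk (kron A B) i j = A $ i $ j *\<^sub>R B"
  by (simp add: blk_def kron_def vec_eq_iff)

lemma blk_mat1: "blk (mat 1) i j = (if i = j then mat 1 else 0)"
  by (simp add: blk_def mat_def vec_eq_iff)

lemma outer_axis_component:
  "outer (axis i 1) (axis j 1) $ a $ b = (if b = j then if a = i then 1 else 0 else 0)"
  by (simp add: outer_def axis_def)

lemma blk_outer_vecI: "blk (outer vecI vecI) i j = outer (axis i 1) (axis j 1)"
  by (simp add: blk_def vec_eq_iff outer_axis_component) (simp add: outer_def vecI_def)

lemma frob_kron_left:
  "frob (kron A B) X = (\<Sum>i\<in>UNIV. \<Sum>j\<in>UNIV. A $ i $ j * frob B (blk X i j))"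
  by (simp add: frob_blk blk_kron frob_scaleR_left)

lemma frob_Jmat_left: "frob Jmat A = (\<Sum>i\<in>UNIV. \<Sum>j\<in>UNIV. A $ i $ j)"
  by (simp add: frob_def Jmat_def)

lemma psd_outer_self: "psd (outer u u)"
  by (simp add: psd_def symmetric_mat_outer_self inner_outer_self)

lemma frob_outer_vecI_left:
  fixes X :: "real^('n::finite \<times> 'n)^('n \<times> 'n)"
  shows "frob (outer vecI vecI) X = (\<Sum>i\<in>UNIV. \<Sum>j\<in>UNIV. X $ (i,i) $ (j,j))"
  unfolding frob_blk blk_outer_vecI frob_outer_left inner_axis_matrix_axis by (simp add: blk_def)

section \<open>The feasible set of SDR I\<close>

context
  fixes X :: "real^('n::finite \<times> 'n)^('n \<times> 'n)"
  assumes feasible: "SDR1_feasible X"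
begin

lemma SDR1_feasible_psd: "psd X"
  using feasible by (simp add: SDR1_feasible_def)

lemma SDR1_feasible_nonneg: "0 \<le> X $ p $ q"
  using feasible unfolding SDR1_feasible_def nonneg_mat_def by blast

lemma SDR1_feasible_block_sum: "(\<Sum>a\<in>UNIV. \<Sum>b\<in>UNIV. X $ (i,a) $ (j,b)) = 1"
  using feasible by (simp add: SDR1_feasible_def frob_commute[of _ Jmat] frob_Jmat_left blk_def)

lemma SDR1_feasible_entry_le_1: "X $ (i,a) $ (j,b) \<le> 1"
proof -
  have "X $ (i,a) $ (j,b) \<le> (\<Sum>q\<in>UNIV. X $ (i, fst q) $ (j, snd q))"
    using member_le_sum[of "(a,b)" UNIV "\<lambda>q. X $ (i, fst q) $ (j, snd q)"]
    by (simp add: SDR1_feasible_nonneg)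
  also have "\<dots> = 1" by (simp add: sum_UNIV_prod SDR1_feasible_block_sum)
  finally show ?thesis .
qed

lemma SDR1_feasible_trace_blk: "trace (blk X i j) = (if i = j then 1 else 0)"
  using feasible by (simp add: SDR1_feasible_def)

lemma SDR1_feasible_frob_mat1: "frob (mat 1) X = real CARD('n)"
proof -
  have "frob (blk (mat 1) i j) (blk X i j) = (if i = j then 1 else 0)" for i j
    by (simp add: blk_mat1 frob_mat1_left frob_zero_left SDR1_feasible_trace_blk)
  then show ?thesis by (simp add: frob_blk)
qed

lemma SDR1_feasible_frob_kron_sum:
  "frob (kron T (mat 1) + kron (mat 1) K + kron Jmat H + kron Z Jmat) X
     = trace T + trace K + frob H Jmat + frob Z Jmat"
proof -
  have diag: "(\<Sum>i\<in>UNIV. blk X i i) = mat 1"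
    and all: "(\<Sum>i\<in>UNIV. \<Sum>j\<in>UNIV. blk X i j) = Jmat"
    using feasible by (simp_all add: SDR1_feasible_def)
  have "frob (kron T (mat 1)) X = trace T"
    by (simp add: frob_kron_left frob_mat1_left SDR1_feasible_trace_blk if_distrib cong: if_cong)
      (simp add: trace_def)
  moreover have "frob (kron (mat 1) K) X = trace K"
  proof -
    have "frob (kron (mat 1) K) X = frob (\<Sum>i\<in>UNIV. blk X i i) K"
      by (simp add: frob_kron_left mat_def if_distrib if_distribR sum.delta frob_sum_left
          frob_commute[of K] cong: if_cong)
    then show ?thesis by (simp add: diag frob_mat1_left)
  qed
  moreover have "frob (kron Jmat H) X = frob H Jmat"
  proof -
    have "frob (kron Jmat H) X = frob (\<Sum>i\<in>UNIV. \<Sum>j\<in>UNIV. blk X i j) H"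
      by (simp add: frob_kron_left Jmat_def frob_sum_left frob_commute[of H])
    then show ?thesis by (simp add: all frob_commute[of Jmat])
  qed
  moreover have "frob (kron Z Jmat) X = frob Z Jmat"
    by (simp add: frob_kron_left frob_Jmat_left blk_def SDR1_feasible_block_sum)
      (simp add: frob_def Jmat_def)
  ultimately show ?thesis by (simp add: frob_add_left)
qed

end

lemma SDR1_feasible_outer_vecI:
  "SDR1_feasible (outer vecI vecI :: real^('n::finite \<times> 'n)^('n \<times> 'n))"
proof -
  have "(\<Sum>i\<in>UNIV. outer (axis i 1) (axis i 1)) = (mat 1 :: real^'n^'n)"
    by (simp add: vec_eq_iff outer_axis_component mat_def sum.delta')
  moreover have "(\<Sum>i\<in>UNIV. \<Sum>j\<in>UNIV. outer (axis i 1) (axis j 1)) = (Jmat :: real^'n^'n)"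
    by (simp add: vec_eq_iff outer_axis_component Jmat_def sum.delta')
  moreover have "trace (outer (axis i 1) (axis j 1) :: real^'n^'n) = (if i = j then 1 else 0)" for i j
    by (simp add: trace_def outer_axis_component)
  moreover have "frob (outer (axis i 1) (axis j 1)) (Jmat :: real^'n^'n) = 1" for i j
    by (simp add: frob_outer_left inner_axis_matrix_axis Jmat_def)
  moreover have "nonneg_mat (outer vecI vecI :: real^('n \<times> 'n)^('n \<times> 'n))"
    by (simp add: nonneg_mat_def outer_def vecI_def)
  ultimately show ?thesis
    by (simp add: SDR1_feasible_def blk_outer_vecI psd_outer_self symmetric_mat_outer_self)
qed

lemma SDR1_feasible_frob_outer_vecI_le:
  fixes X :: "real^('n::finite \<times> 'n)^('n \<times> 'n)"
  assumes "SDR1_feasible X"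
  shows "frob (outer vecI vecI) X \<le> (real CARD('n))\<^sup>2"
proof -
  have "frob (outer vecI vecI) X \<le> (\<Sum>i\<in>(UNIV :: 'n set). \<Sum>j\<in>(UNIV :: 'n set). 1)"
    unfolding frob_outer_vecI_left
    by (intro sum_mono) (rule SDR1_feasible_entry_le_1[OF assms])
  then show ?thesis by (simp add: power2_eq_square)
qed

lemma SDR1_feasible_frob_outer_vecI_eq:
  fixes X :: "real^('n::finite \<times> 'n)^('n \<times> 'n)"
  assumes feasible: "SDR1_feasible X"
    and max: "frob (outer vecI vecI) X = (real CARD('n))\<^sup>2"
  shows "X = outer vecI vecI"
proof -
  have gap_nonneg: "0 \<le> 1 - X $ (i,i) $ (j,j)" for i j
    using SDR1_feasible_entry_le_1[OF feasible] by simp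
  have "(\<Sum>i\<in>UNIV. \<Sum>j\<in>UNIV. 1 - X $ (i,i) $ (j,j)) = 0"
    using max by (simp add: sum_subtractf frob_outer_vecI_left power2_eq_square)
  then have diag: "X $ (i,i) $ (j,j) = 1" for i j
    using gap_nonneg by (simp add: sum_nonneg_eq_0_iff sum_nonneg)
  have off_diag: "X $ (i,a) $ (j,b) = 0" if "(a,b) \<noteq> (i,j)" for i j a b
  proof -
    define f where "f q = X $ (i, fst q) $ (j, snd q)" for q :: "'n \<times> 'n"
    have "sum f UNIV = f (i,j) + sum f (UNIV - {(i,j)})"
      by (simp add: sum.remove)
    moreover have "sum f UNIV = 1"
      using SDR1_feasible_block_sum[OF feasible] by (simp add: f_def sum_UNIV_prod)
    ultimately have "sum f (UNIV - {(i,j)}) = 0" by (simp add: f_def diag)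
    then have "\<forall>q\<in>UNIV - {(i,j)}. f q = 0"
      by (simp add: sum_nonneg_eq_0_iff f_def SDR1_feasible_nonneg[OF feasible])
    then have "f (a,b) = 0" using that by blast
    then show ?thesis by (simp add: f_def)
  qed
  show ?thesis
    by (simp add: vec_eq_iff outer_def vecI_def diag off_diag)
qed

section \<open>Dual certificates\<close>

lemma SDR1_objective_gap:
  fixes M B S :: "real^('n::finite \<times> 'n)^('n \<times> 'n)" and c :: real
  assumes Qx: "(M - B - S) *v vecI = 0"
    and Qpsd: "psd (M - B - S - c *\<^sub>R (mat 1 - (1 / real CARD('n)) *\<^sub>R outer vecI vecI))"
    and Bnn: "nonneg_mat B" and Bx: "hadamard B (outer vecI vecI) = 0"
    and S_const: "\<And>X. SDR1_feasible X \<Longrightarrow> frob S X = frob S (outer vecI vecI)"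
    and feasible: "SDR1_feasible X"
  shows "frob M (outer vecI vecI) + c * (real CARD('n) - frob (outer vecI vecI) X / real CARD('n))
    \<le> frob M X"
proof -
  define Q where "Q = M - B - S"
  have M_split: "frob M Y = frob Q Y + frob B Y + frob S Y" for Y
    by (simp add: Q_def frob_diff_left)
  have "frob Q (outer vecI vecI) = 0"
    using Qx by (simp add: Q_def frob_commute[of _ "outer vecI vecI"] frob_outer_left)
  moreover have "frob B (outer vecI vecI) = 0"
  proof -
    have "B $ p $ q * outer vecI vecI $ p $ q = 0" for p q
      using arg_cong[OF Bx, of "\<lambda>A. A $ p $ q"] by (simp add: hadamard_def)
    then show ?thesis unfolding frob_def by (simp only: sum.neutral_const)
  qed
  moreover have "c * (real CARD('n) - frob (outer vecI vecI) X / real CARD('n)) \<le> frob Q X"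
    using frob_psd_nonneg[OF Qpsd[folded Q_def] SDR1_feasible_psd[OF feasible]]
    by (simp add: frob_diff_left frob_scaleR_left SDR1_feasible_frob_mat1[OF feasible])
  moreover have "0 \<le> frob B X"
    using Bnn feasible by (simp add: frob_nonneg SDR1_feasible_def)
  ultimately show ?thesis
    using M_split[of X] M_split[of "outer vecI vecI"] S_const[OF feasible] by linarith
qed

lemma SDR1_dual_certificate:
  fixes M B S :: "real^('n::finite \<times> 'n)^('n \<times> 'n)" and c :: real
  assumes Qx: "(M - B - S) *v vecI = 0"
    and Qpsd: "psd (M - B - S - c *\<^sub>R (mat 1 - (1 / real CARD('n)) *\<^sub>R outer vecI vecI))"
    and Bnn: "nonneg_mat B" and Bx: "hadamard B (outer vecI vecI) = 0"
    and S_const: "\<And>X. SDR1_feasible X \<Longrightarrow> frob S X = frob S (outer vecI vecI)"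
    and "c \<ge> 0"
  shows "SDR1_global_min M (outer vecI vecI)"
    and "c > 0 \<Longrightarrow> SDR1_unique_global_min M (outer vecI vecI)"
proof -
  define n where "n = real CARD('n)"
  have "0 < n" by (simp add: n_def)
  have gap: "frob M (outer vecI vecI) + c * (n - frob (outer vecI vecI) X / n) \<le> frob M X"
    if "SDR1_feasible X" for X :: "real^('n \<times> 'n)^('n \<times> 'n)"
    using SDR1_objective_gap[OF Qx Qpsd Bnn Bx S_const that] by (simp add: n_def)
  have slack_nonneg: "0 \<le> n - frob (outer vecI vecI) X / n"
    if "SDR1_feasible X" for X :: "real^('n \<times> 'n)^('n \<times> 'n)"
  proof -
    have "frob (outer vecI vecI) X \<le> n * n"
      using SDR1_feasible_frob_outer_vecI_le[OF that] by (simp add: n_def power2_eq_square)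
    then show ?thesis using \<open>0 < n\<close> by (simp add: divide_le_eq)
  qed
  show global: "SDR1_global_min M (outer vecI vecI)"
    unfolding SDR1_global_min_def
  proof (intro conjI allI impI SDR1_feasible_outer_vecI)
    fix X :: "real^('n \<times> 'n)^('n \<times> 'n)"
    assume "SDR1_feasible X"
    then have "0 \<le> c * (n - frob (outer vecI vecI) X / n)"
      using \<open>c \<ge> 0\<close> slack_nonneg by simp
    then show "frob M (outer vecI vecI) \<le> frob M X"
      using gap[OF \<open>SDR1_feasible X\<close>] by linarith
  qed
  assume "c > 0"
  have "X = outer vecI vecI" if "SDR1_global_min M X" for X :: "real^('n \<times> 'n)^('n \<times> 'n)"
  proof -
    have feasible: "SDR1_feasible X" and le: "frob M X \<le> frob M (outer vecI vecI)"
      using that SDR1_feasible_outer_vecI unfolding SDR1_global_min_def by blast+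
    have "c * (n - frob (outer vecI vecI) X / n) \<le> 0"
      using gap[OF feasible] le by linarith
    then have "n - frob (outer vecI vecI) X / n \<le> 0"
      using \<open>c > 0\<close> by (simp add: mult_le_0_iff)
    then have "frob (outer vecI vecI) X / n = n"
      using slack_nonneg[OF feasible] by linarith
    then have "frob (outer vecI vecI) X = n * n"
      using \<open>0 < n\<close> by (simp add: divide_eq_eq)
    then have "frob (outer vecI vecI) X = (real CARD('n))\<^sup>2"
      by (simp add: n_def power2_eq_square)
    then show ?thesis by (rule SDR1_feasible_frob_outer_vecI_eq[OF feasible])
  qed
  then show "SDR1_unique_global_min M (outer vecI vecI)"
    using global unfolding SDR1_unique_global_min_def by blast
qed

theorem theorem3:
  fixes A \<Delta> T K Z H :: "real^'n^'n"
    and B :: "real^('n \<times> 'n)^('n \<times> 'n)"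
    and c :: real
  assumes symA: "symmetric_mat A" and symD: "symmetric_mat \<Delta>"
    and symB: "symmetric_mat B" and Bnn: "nonneg_mat B"
    and Bx: "hadamard B (outer vecI vecI) = 0"
    and symT: "symmetric_mat T" and symK: "symmetric_mat K"
    and symZ: "symmetric_mat Z" and symH: "symmetric_mat H"
    and c0: "c \<ge> 0"
    and Qx: "(let C = A + \<Delta>;
                 D = kron (mat 1 :: real^'n^'n) A - kron C (mat 1 :: real^'n^'n);
                 M = D ** D;
                 S = kron T (mat 1) + kron (mat 1) K + kron Jmat H + kron Z Jmat;
                 Q = M - B - S
             in Q *v vecI = 0 \<and>
                psd (Q - c *\<^sub>R (mat 1 - (1 / real CARD('n)) *\<^sub>R outer vecI vecI)))"
  shows "(let C = A + \<Delta>;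
              D = kron (mat 1 :: real^'n^'n) A - kron C (mat 1 :: real^'n^'n)
          in SDR1_global_min (D ** D) (outer vecI vecI) \<and>
             (c > 0 \<longrightarrow> SDR1_unique_global_min (D ** D) (outer vecI vecI)))"
proof -
  define D where "D = kron (mat 1 :: real^'n^'n) A - kron (A + \<Delta>) (mat 1 :: real^'n^'n)"
  define S :: "real^('n \<times> 'n)^('n \<times> 'n)"
    where "S = kron T (mat 1) + kron (mat 1) K + kron Jmat H + kron Z Jmat"
  have Q: "(D ** D - B - S) *v vecI = 0"
    and Qpsd: "psd (D ** D - B - S - c *\<^sub>R (mat 1 - (1 / real CARD('n)) *\<^sub>R outer vecI vecI))"
    using Qx by (simp_all add: Let_def D_def S_def)
  have S_const: "frob S X = frob S (outer vecI vecI)"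
    if "SDR1_feasible X" for X :: "real^('n \<times> 'n)^('n \<times> 'n)"
    unfolding S_def
    by (simp only: SDR1_feasible_frob_kron_sum[OF that]
        SDR1_feasible_frob_kron_sum[OF SDR1_feasible_outer_vecI])
  show ?thesis
    using SDR1_dual_certificate[OF Q Qpsd Bnn Bx S_const c0] by (simp add: Let_def D_def)
qed

end
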